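(* Let $y,l,u\in\mathcal{R}(\mathbb{R}^{+},\mathbb{R})$ be such that $l\leq u$, $l_0\leq y_0\leq u_0$, and $\inf_{s\leq t}(u_s-l_s)>0$ for every $t\geq 0$. Then the reflection problem $RP^u_l(y)$ has at most one solution: if $(x,k)$ and $(\tilde{x},\tilde{k})$ are solutions of $RP^u_l(y)$, then $x=\tilde{x}$ and $k=\tilde{k}$.
   Context: A function $f:\mathbb{R}^+=[0,\infty)\to\mathbb{R}$ is regulated if it has a left limit $f_{t^-}$ at every $t>0$ and a right limit $f_{t^+}$ at every $t\geq0$; $\mathcal{R}(\mathbb{R}^{+},\mathbb{R})$ is the set of regulated functions. Write $\Delta^+f_t=f_{t^+}-f_t$, $\Delta^-f_t=f_t-f_{t^-}$, $a\wedge b=\min(a,b)$, $a\vee b=\max(a,b)$. A regulated function $\phi$ of bounded variation (on every $[0,t]$) decomposes as $\phi_t=\phi^c_t+\sum_{0<s\leq t}\Delta^-\phi_s+\sum_{0\leq s<t}\Delta^+\phi_s$ with $\phi^c$ continuous; its right-continuous part is $\phi^r_t=\phi^c_t+\sum_{0<s\leq t}\Delta^-\phi_s$. Reflection problem $RP^u_l(y)$: for $y,l,u\in\mathcal{R}(\mathbb{R}^{+},\mathbb{R})$ with $l_0\leq y_0\leq u_0$, a pair $(x,k)$ of regulated functions is a solution if there exist $\phi^1,\phi^2$ such that: (i) $x=y+k=y+\phi^1-\phi^2$; (ii) $l\leq x\leq u$; (iii) $\phi^1,\phi^2$ are non-decreasing with $\phi^1_0=\phi^2_0=0$; (iv) $\int_{[0,\infty[}\big((x_s-l_s)\wedge(x_{s^+}-l_{s^+})\big)\,d\phi^{1,r}_s=\int_{[0,\infty[}\big((u_s-x_s)\wedge(u_{s^+}-x_{s^+})\big)\,d\phi^{2,r}_s=0$;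 (v) for every $t\geq0$, $\sum_{s\leq t}(x_{s^+}-l_{s^+})\Delta^+\phi^1_s=\sum_{s\leq t}(u_s-x_s)\Delta^+\phi^1_s=0$ and $\sum_{s\leq t}(u_{s^+}-x_{s^+})\Delta^+\phi^2_s=\sum_{s\leq t}(x_s-l_s)\Delta^+\phi^2_s=0$. Here $\phi^{i,r}$ is the right-continuous part of $\phi^i$. *)

theory Defs
  imports "HOL-Analysis.Analysis"
begin

text \<open>Functions on R+ = [0,infinity) are represented as functions real => real;
  only their values on {0..} matter.\<close>

definition regulated :: "(real \<Rightarrow> real) \<Rightarrow> bool" where
  "regulated f \<longleftrightarrow>
     (\<forall>t>0. \<exists>L. (f \<longlongrightarrow> L) (at_left t)) \<and> (\<forall>t\<ge>0. \<exists>L. (f \<longlongrightarrow> L) (at_right t))"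

definition rlim :: "(real \<Rightarrow> real) \<Rightarrow> real \<Rightarrow> real" where
  "rlim f t = Lim (at_right t) f"

definition rjump :: "(real \<Rightarrow> real) \<Rightarrow> real \<Rightarrow> real" where
  "rjump f t = rlim f t - f t"

text \<open>Right-continuous part phi^r = phi^c + sum of left jumps
  = phi - sum_{0 <= s < t} Delta^+ phi_s, extended by 0 to negative times.\<close>
definition rc_part :: "(real \<Rightarrow> real) \<Rightarrow> real \<Rightarrow> real" where
  "rc_part \<phi> t = (if t < 0 then 0 else \<phi> t - (\<Sum>\<^sub>\<infinity>s\<in>{0..<t}. rjump \<phi> s))"

definition LS_int :: "(real \<Rightarrow> real) \<Rightarrow> (real \<Rightarrow> real) \<Rightarrow> ennreal" where
  "LS_int g \<phi> = (\<integral>\<^sup>+ s. ennreal (g s) * indicator {0..} s \<partial>interval_measure (rc_part \<phi>))"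

definition RP_solution ::
  "(real \<Rightarrow> real) \<Rightarrow> (real \<Rightarrow> real) \<Rightarrow> (real \<Rightarrow> real) \<Rightarrow> (real \<Rightarrow> real) \<Rightarrow> (real \<Rightarrow> real) \<Rightarrow> bool"
  where
  "RP_solution y l u x k \<longleftrightarrow>
     regulated x \<and> regulated k \<and>
     (\<exists>\<phi>1 \<phi>2.
        \<comment> \<open>(i)\<close>
        (\<forall>t\<ge>0. x t = y t + k t \<and> k t = \<phi>1 t - \<phi>2 t) \<and>
        \<comment> \<open>(ii)\<close>
        (\<forall>t\<ge>0. l t \<le> x t \<and> x t \<le> u t) \<and>
        \<comment> \<open>(iii)\<close>
        mono_on {0..} \<phi>1 \<and> mono_on {0..} \<phi>2 \<and> \<phi>1 0 = 0 \<and> \<phi>2 0 = 0 \<and>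
        \<comment> \<open>(iv)\<close>
        LS_int (\<lambda>s. min (x s - l s) (rlim x s - rlim l s)) \<phi>1 = 0 \<and>
        LS_int (\<lambda>s. min (u s - x s) (rlim u s - rlim x s)) \<phi>2 = 0 \<and>
        \<comment> \<open>(v)\<close>
        (\<forall>t\<ge>0.
           ((\<lambda>s. (rlim x s - rlim l s) * rjump \<phi>1 s) has_sum 0) {0..t} \<and>
           ((\<lambda>s. (u s - x s) * rjump \<phi>1 s) has_sum 0) {0..t} \<and>
           ((\<lambda>s. (rlim u s - rlim x s) * rjump \<phi>2 s) has_sum 0) {0..t} \<and>
           ((\<lambda>s. (x s - l s) * rjump \<phi>2 s) has_sum 0) {0..t}))"

end

theory Submission
  imports Defs
begin

text \<open>Let \<open>(x, \<phi>1, \<phi>2)\<close> and \<open>(x', \<psi>1, \<psi>2)\<close> be two solutions and \<open>d = x - x'\<close>. Since both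
  are driven by the same \<open>y\<close>, \<open>d\<close> can only increase where \<open>\<phi>1\<close> (pushing \<open>x\<close> up from \<open>l\<close>) or
  \<open>\<psi>2\<close> (pushing \<open>x'\<close> down from \<open>u\<close>) increases. Where \<open>d > 0\<close>, however, \<open>x\<close> is strictly
  above \<open>l\<close> and \<open>x'\<close> strictly below \<open>u\<close>, also after taking right limits, so the
  complementarity conditions (iv) and (v) make \<open>\<phi>1\<close> and \<open>\<psi>2\<close> locally constant to the right and
  left-continuous there. A continuous induction from the last time \<open>d \<le> 0\<close> then shows that
  \<open>d\<close> never becomes positive; by symmetry \<open>x = x'\<close>, and \<open>k = x - y = k'\<close>.\<close>

section \<open>A comparison principle\<close>

lemma right_flat_left_continuous_imp_eq:
  fixes f :: "real \<Rightarrow> 'a::t2_space"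
  assumes "a \<le> b"
    and right: "\<And>s. s \<in> {a..<b} \<Longrightarrow> \<forall>\<^sub>F r in at_right s. f r = f s"
    and left: "\<And>s. s \<in> {a<..b} \<Longrightarrow> (f \<longlongrightarrow> f s) (at_left s)"
  shows "f b = f a"
proof -
  define T where "T = {r \<in> {a..b}. \<forall>t\<in>{a..r}. f t = f a}"
  define M where "M = Sup T"
  have "a \<in> T" using \<open>a \<le> b\<close> by (simp add: T_def)
  have bdd: "bdd_above T" by (rule bdd_aboveI[of _ b]) (simp add: T_def)
  have "a \<le> M" unfolding M_def using \<open>a \<in> T\<close> bdd by (rule cSup_upper)
  have "M \<le> b" unfolding M_def using \<open>a \<in> T\<close> by (intro cSup_least) (auto simp: T_def)
  have below: "f t = f a" if t: "a \<le> t" "t < M" for t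
  proof -
    obtain r where "r \<in> T" "t < r"
      using less_cSupE[of t T] t \<open>a \<in> T\<close> unfolding M_def by blast
    moreover from t \<open>t < r\<close> have "t \<in> {a..r}" by simp
    ultimately show ?thesis unfolding T_def by blast
  qed
  have "f M = f a"
  proof (cases "M = a")
    case False
    with \<open>a \<le> M\<close> have "\<forall>\<^sub>F r in at_left M. f r = f a"
      unfolding eventually_at_left_field by (intro exI[of _ a] conjI allI impI below) auto
    then have lim_a: "(f \<longlongrightarrow> f a) (at_left M)" by (rule tendsto_eventually)
    have lim_M: "(f \<longlongrightarrow> f M) (at_left M)" using left False \<open>a \<le> M\<close> \<open>M \<le> b\<close> by simp
    show ?thesis using tendsto_unique[OF trivial_limit_at_left_real lim_M lim_a] .
  qed simp
  have "M = b"
  proof (rule ccontr)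
    assume "M \<noteq> b"
    with \<open>a \<le> M\<close> \<open>M \<le> b\<close> have "\<forall>\<^sub>F r in at_right M. f r = f M" by (intro right) simp
    then obtain c where "c > M" and c: "\<And>r. M < r \<Longrightarrow> r < c \<Longrightarrow> f r = f M"
      unfolding eventually_at_right_field by blast
    define r where "r = min b ((M + c) / 2)"
    have r: "M < r" "r < c" "r \<le> b"
      using \<open>c > M\<close> \<open>M \<le> b\<close> \<open>M \<noteq> b\<close> by (simp_all add: r_def min_def)
    have "f t = f a" if "t \<in> {a..r}" for t
      using below[of t] c[of t] \<open>f M = f a\<close> that r by (cases t M rule: linorder_cases) auto
    moreover have "r \<in> {a..b}" using r \<open>a \<le> M\<close> by simp
    ultimately have "r \<in> T" unfolding T_def by blast
    then have "r \<le> M" unfolding M_def using bdd by (rule cSup_upper)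
    with r show False by simp
  qed
  with \<open>f M = f a\<close> show ?thesis by simp
qed

locale controlled_increase =
  fixes d D R :: "real \<Rightarrow> real"
  assumes inc: "\<And>a b. 0 \<le> a \<Longrightarrow> a \<le> b \<Longrightarrow> d b - d a \<le> D b - D a"
    and tendsto_right: "\<And>s. 0 \<le> s \<Longrightarrow> (d \<longlongrightarrow> R s) (at_right s)"
    and pos_if_right_pos: "\<And>s. 0 \<le> s \<Longrightarrow> R s > 0 \<Longrightarrow> d s > 0"
    and flat_right: "\<And>s. 0 \<le> s \<Longrightarrow> d s > 0 \<Longrightarrow> \<forall>\<^sub>F r in at_right s. D r = D s"
    and tendsto_left: "\<And>s. 0 < s \<Longrightarrow> d s > 0 \<Longrightarrow> (D \<longlongrightarrow> D s) (at_left s)"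
begin

lemma flat_where_pos:
  assumes "0 \<le> s" "s \<le> t" and pos: "\<And>r. r \<in> {s..t} \<Longrightarrow> d r > 0"
  shows "D t = D s"
proof (rule right_flat_left_continuous_imp_eq[OF \<open>s \<le> t\<close>])
  fix r assume "r \<in> {s..<t}"
  with \<open>0 \<le> s\<close> pos[of r] show "\<forall>\<^sub>F q in at_right r. D q = D r" by (intro flat_right) auto
next
  fix r assume "r \<in> {s<..t}"
  with \<open>0 \<le> s\<close> pos[of r] show "(D \<longlongrightarrow> D r) (at_left r)" by (intro tendsto_left) auto
qed

lemma pos_if_pos_after:
  assumes "0 \<le> \<sigma>" "\<sigma> < t" and pos: "\<And>r. \<sigma> < r \<Longrightarrow> r \<le> t \<Longrightarrow> d r > 0"
  shows "d \<sigma> > 0"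
proof -
  have "d t \<le> R \<sigma>"
  proof (rule tendsto_lowerbound[OF tendsto_right[OF \<open>0 \<le> \<sigma>\<close>]])
    show "\<forall>\<^sub>F r in at_right \<sigma>. d t \<le> d r"
      unfolding eventually_at_right_field
    proof (intro exI[of _ t] conjI allI impI)
      fix r assume r: "\<sigma> < r" "r < t"
      have "D t = D r" by (rule flat_where_pos) (use r \<open>0 \<le> \<sigma>\<close> pos in auto)
      with inc[of r t] r \<open>0 \<le> \<sigma>\<close> show "d t \<le> d r" by simp
    qed (rule \<open>\<sigma> < t\<close>)
  qed simp
  with pos[of t] \<open>\<sigma> < t\<close> show ?thesis by (intro pos_if_right_pos \<open>0 \<le> \<sigma>\<close>) simp
qed

lemma eventually_pos_before:
  assumes "0 < \<sigma>" "\<sigma> \<le> t" and pos: "\<And>r. r \<in> {\<sigma>..t} \<Longrightarrow> d r > 0"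
  shows "\<forall>\<^sub>F a in at_left \<sigma>. d a > 0"
proof -
  have "D t = D \<sigma>" by (rule flat_where_pos) (use assms in auto)
  have "d \<sigma> > 0" "d t > 0" using pos \<open>\<sigma> \<le> t\<close> by auto
  have "\<forall>\<^sub>F a in at_left \<sigma>. dist (D a) (D \<sigma>) < d t"
    using tendsto_left[OF \<open>0 < \<sigma>\<close> \<open>d \<sigma> > 0\<close>] \<open>d t > 0\<close> by (rule tendstoD)
  moreover have "\<forall>\<^sub>F a in at_left \<sigma>. 0 < a \<and> a < \<sigma>"
    unfolding eventually_at_left_field using \<open>0 < \<sigma>\<close> by (intro exI[of _ 0]) auto
  ultimately show ?thesis
  proof eventually_elim
    case (elim a)
    then have "D \<sigma> - D a < d t"
      using abs_ge_minus_self[of "D a - D \<sigma>"] unfolding dist_real_def by linarith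
    moreover have "d t - d a \<le> D t - D a" using inc[of a t] elim \<open>\<sigma> \<le> t\<close> by simp
    ultimately show "d a > 0" using \<open>D t = D \<sigma>\<close> by linarith
  qed
qed

lemma nonpos:
  assumes "d 0 \<le> 0" "0 \<le> t"
  shows "d t \<le> 0"
proof (rule ccontr)
  assume "\<not> d t \<le> 0"
  define E where "E = {s \<in> {0..t}. d s \<le> 0}"
  define \<sigma> where "\<sigma> = Sup E"
  have "0 \<in> E" using assms by (simp add: E_def)
  have bdd: "bdd_above E" by (rule bdd_aboveI[of _ t]) (simp add: E_def)
  have "0 \<le> \<sigma>" unfolding \<sigma>_def using \<open>0 \<in> E\<close> bdd by (rule cSup_upper)
  have "\<sigma> \<le> t" unfolding \<sigma>_def using \<open>0 \<in> E\<close> by (intro cSup_least) (auto simp: E_def)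
  have pos_after: "d r > 0" if "\<sigma> < r" "r \<le> t" for r
  proof (rule ccontr)
    assume "\<not> d r > 0"
    with that \<open>0 \<le> \<sigma>\<close> have "r \<in> E" by (simp add: E_def)
    then have "r \<le> \<sigma>" unfolding \<sigma>_def using bdd by (rule cSup_upper)
    with that show False by simp
  qed
  have "d \<sigma> > 0"
  proof (cases "\<sigma> = t")
    case False
    with \<open>\<sigma> \<le> t\<close> show ?thesis by (intro pos_if_pos_after[OF \<open>0 \<le> \<sigma>\<close>] pos_after) auto
  qed (use \<open>\<not> d t \<le> 0\<close> in simp)
  then have "\<sigma> \<notin> E" by (simp add: E_def)
  with \<open>0 \<in> E\<close> \<open>0 \<le> \<sigma>\<close> have "0 < \<sigma>" by (cases "\<sigma> = 0") auto
  have "\<forall>\<^sub>F a in at_left \<sigma>. d a > 0"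
  proof (rule eventually_pos_before[OF \<open>0 < \<sigma>\<close> \<open>\<sigma> \<le> t\<close>])
    fix r assume "r \<in> {\<sigma>..t}"
    with \<open>d \<sigma> > 0\<close> pos_after[of r] show "d r > 0" by (cases "r = \<sigma>") auto
  qed
  then obtain b where "b < \<sigma>" and pos_before: "\<And>a. b < a \<Longrightarrow> a < \<sigma> \<Longrightarrow> d a > 0"
    unfolding eventually_at_left_field by blast
  obtain a where "a \<in> E" "b < a"
    using less_cSupE[of b E] \<open>b < \<sigma>\<close> \<open>0 \<in> E\<close> unfolding \<sigma>_def by blast
  moreover from \<open>a \<in> E\<close> have "a \<le> \<sigma>" unfolding \<sigma>_def using bdd by (rule cSup_upper)
  ultimately have "d a > 0" using \<open>\<sigma> \<notin> E\<close> pos_before[of a] by (cases "a = \<sigma>") auto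
  with \<open>a \<in> E\<close> show False by (simp add: E_def)
qed

end

section \<open>Right limits and jumps of monotone functions\<close>

lemma tendsto_Inf_mono_on:
  fixes \<phi> :: "real \<Rightarrow> real"
  assumes "mono_on {0..} \<phi>" and "0 \<le> t"
  shows "(\<phi> \<longlongrightarrow> Inf (\<phi> ` {t<..})) (at_right t)"
proof -
  have "(\<phi> \<longlongrightarrow> Inf (\<phi> ` ({t<..} \<inter> UNIV))) (at t within ({t<..} \<inter> UNIV))"
    by (rule Lim_right_bound[where K="\<phi> t"]) (use assms in \<open>auto intro: mono_onD\<close>)
  then show ?thesis by simp
qed

lemma rlim_mono_on_eq_Inf: "mono_on {0..} \<phi> \<Longrightarrow> 0 \<le> t \<Longrightarrow> rlim \<phi> t = Inf (\<phi> ` {t<..})"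
  unfolding rlim_def by (intro tendsto_Lim tendsto_Inf_mono_on) auto

lemma tendsto_rlim_mono_on: "mono_on {0..} \<phi> \<Longrightarrow> 0 \<le> t \<Longrightarrow> (\<phi> \<longlongrightarrow> rlim \<phi> t) (at_right t)"
  using tendsto_Inf_mono_on rlim_mono_on_eq_Inf by metis

lemma mono_on_le_rlim:
  assumes mono: "mono_on {0..} \<phi>" and "0 \<le> t"
  shows "\<phi> t \<le> rlim \<phi> t"
  unfolding rlim_mono_on_eq_Inf[OF assms]
  by (rule cInf_greatest) (use \<open>0 \<le> t\<close> in \<open>auto intro: mono_onD[OF mono] simp: gt_ex\<close>)

lemma mono_on_rlim_le:
  assumes mono: "mono_on {0..} \<phi>" and "0 \<le> t" "t < s"
  shows "rlim \<phi> t \<le> \<phi> s"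
  unfolding rlim_mono_on_eq_Inf[OF mono \<open>0 \<le> t\<close>]
  by (rule cInf_lower) (use assms in \<open>auto intro!: exI[of _ "\<phi> t"] mono_onD[OF mono] simp: bdd_below_def\<close>)

lemma rjump_nonneg: "mono_on {0..} \<phi> \<Longrightarrow> 0 \<le> t \<Longrightarrow> 0 \<le> rjump \<phi> t"
  using mono_on_le_rlim[of \<phi> t] by (simp add: rjump_def)

lemma sum_rjump_le:
  assumes mono: "mono_on {0..} \<phi>" and "0 \<le> a"
  shows "finite G \<Longrightarrow> G \<subseteq> {a..<b} \<Longrightarrow> a \<le> b \<Longrightarrow> sum (rjump \<phi>) G \<le> \<phi> b - \<phi> a"
proof (induction G arbitrary: b rule: finite_linorder_max_induct)
  case empty
  then show ?case using mono_onD[OF mono, of a b] \<open>0 \<le> a\<close> by simp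
next
  case (insert c G)
  have "sum (rjump \<phi>) G \<le> \<phi> c - \<phi> a"
    using insert by (intro insert.IH) auto
  moreover have "rjump \<phi> c \<le> \<phi> b - \<phi> c"
    using insert \<open>0 \<le> a\<close> mono_on_rlim_le[OF mono, of c b] by (auto simp: rjump_def)
  moreover have "c \<notin> G" using insert by auto
  ultimately show ?case using insert by simp
qed

lemma rjump_summable_on:
  assumes mono: "mono_on {0..} \<phi>" and "0 \<le> a" "A \<subseteq> {a..<b}"
  shows "rjump \<phi> summable_on A"
proof (cases "a \<le> b")
  case True
  have "rjump \<phi> summable_on {a..<b}"
    by (rule nonneg_bdd_above_summable_on)
       (use assms True rjump_nonneg[OF mono] sum_rjump_le[OF mono \<open>0 \<le> a\<close> _ _ True]
         in \<open>auto intro!: bdd_aboveI[of _ "\<phi> b - \<phi> a"]\<close>)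
  then show ?thesis using \<open>A \<subseteq> {a..<b}\<close> by (rule summable_on_subset)
next
  case False
  with assms(3) have "A = {}" by auto
  then show ?thesis by simp
qed

lemma infsum_rjump_Ico_le:
  assumes mono: "mono_on {0..} \<phi>" and "0 \<le> a" "a \<le> b"
  shows "infsum (rjump \<phi>) {a..<b} \<le> \<phi> b - \<phi> a"
  by (rule infsum_le_finite_sums[OF rjump_summable_on[OF mono \<open>0 \<le> a\<close> order_refl]])
     (use sum_rjump_le[OF mono \<open>0 \<le> a\<close> _ _ \<open>a \<le> b\<close>] in auto)

lemma infsum_rjump_Ioo_le:
  assumes mono: "mono_on {0..} \<phi>" and "0 \<le> a" "a < b"
  shows "infsum (rjump \<phi>) {a<..<b} \<le> \<phi> b - rlim \<phi> a"
proof (rule infsum_le_finite_sums)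
  show "rjump \<phi> summable_on {a<..<b}"
    by (rule rjump_summable_on[OF mono \<open>0 \<le> a\<close>]) auto
  fix G assume G: "finite G" "G \<subseteq> {a<..<b}"
  show "sum (rjump \<phi>) G \<le> \<phi> b - rlim \<phi> a"
  proof (cases "G = {}")
    case True
    then show ?thesis using mono_on_rlim_le[OF mono assms(2,3)] by simp
  next
    case False
    define c where "c = Min G"
    have "c \<in> G" using G False by (simp add: c_def)
    have "sum (rjump \<phi>) G \<le> \<phi> b - \<phi> c"
      by (rule sum_rjump_le[OF mono]) (use G \<open>c \<in> G\<close> \<open>0 \<le> a\<close> in \<open>auto simp: c_def\<close>)
    moreover have "rlim \<phi> a \<le> \<phi> c"
      using mono_on_rlim_le[OF mono \<open>0 \<le> a\<close>] \<open>c \<in> G\<close> G by auto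
    ultimately show ?thesis by simp
  qed
qed

lemma infsum_rjump_Ico_le_Sup:
  assumes mono: "mono_on {0..} \<phi>" and "0 \<le> a" "a < s"
  shows "infsum (rjump \<phi>) {a..<s} \<le> Sup (\<phi> ` {0..<s}) - \<phi> a"
proof (rule infsum_le_finite_sums)
  show "rjump \<phi> summable_on {a..<s}"
    by (rule rjump_summable_on[OF mono \<open>0 \<le> a\<close> order_refl])
  have bdd: "bdd_above (\<phi> ` {0..<s})"
    by (rule bdd_aboveI[of _ "\<phi> s"]) (auto intro: mono_onD[OF mono])
  fix G assume G: "finite G" "G \<subseteq> {a..<s}"
  show "sum (rjump \<phi>) G \<le> Sup (\<phi> ` {0..<s}) - \<phi> a"
  proof (cases "G = {}")
    case True
    have "\<phi> a \<le> Sup (\<phi> ` {0..<s})" using assms bdd by (intro cSup_upper) auto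
    with True show ?thesis by simp
  next
    case False
    define b where "b = (Max G + s) / 2"
    have "Max G \<in> G" using G False by simp
    then have b: "Max G < b" "b < s" "a \<le> b" using G by (auto simp: b_def)
    have "G \<subseteq> {a..<b}"
    proof
      fix r assume "r \<in> G"
      then have "a \<le> r" "r \<le> Max G" using G by auto
      with b show "r \<in> {a..<b}" by simp
    qed
    then have "sum (rjump \<phi>) G \<le> \<phi> b - \<phi> a"
      by (rule sum_rjump_le[OF mono \<open>0 \<le> a\<close> G(1) _ \<open>a \<le> b\<close>])
    moreover have "\<phi> b \<le> Sup (\<phi> ` {0..<s})" using b assms bdd by (intro cSup_upper) auto
    ultimately show ?thesis by simp
  qed
qed

section \<open>The right-continuous part and its Stieltjes measure\<close>

lemma rc_part_diff:
  assumes mono: "mono_on {0..} \<phi>" and "0 \<le> a" "a \<le> b"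
  shows "\<phi> b - \<phi> a = (rc_part \<phi> b - rc_part \<phi> a) + infsum (rjump \<phi>) {a..<b}"
proof -
  have "{0..<b} = {0..<a} \<union> {a..<b}" using assms by auto
  then have "infsum (rjump \<phi>) {0..<b} = infsum (rjump \<phi>) {0..<a} + infsum (rjump \<phi>) {a..<b}"
    by (simp add: infsum_Un_disjoint rjump_summable_on[OF mono order_refl order_refl]
        rjump_summable_on[OF mono \<open>0 \<le> a\<close> order_refl])
  with assms show ?thesis by (simp add: rc_part_def)
qed

lemma rc_part_mono:
  assumes mono: "mono_on {0..} \<phi>" and "\<phi> 0 = 0" and "a \<le> b"
  shows "rc_part \<phi> a \<le> rc_part \<phi> b"
proof -
  have *: "rc_part \<phi> a \<le> rc_part \<phi> b" if "0 \<le> a" "a \<le> b" for a b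
    using rc_part_diff[OF mono that] infsum_rjump_Ico_le[OF mono that] by simp
  show ?thesis
  proof (cases "a < 0")
    case True
    then show ?thesis using *[of 0 b] \<open>\<phi> 0 = 0\<close> by (cases "b < 0") (auto simp: rc_part_def)
  qed (use * \<open>a \<le> b\<close> in auto)
qed

lemma rc_part_continuous_right:
  assumes mono: "mono_on {0..} \<phi>" and "\<phi> 0 = 0"
  shows "continuous (at_right a) (rc_part \<phi>)"
proof (cases "a < 0")
  case True
  have "\<forall>\<^sub>F r in at_right a. rc_part \<phi> r = rc_part \<phi> a"
    unfolding eventually_at_right_field using True
    by (intro exI[of _ 0]) (auto simp: rc_part_def)
  then show ?thesis unfolding continuous_within
    by (rule tendsto_eventually)
next
  case False
  then have "0 \<le> a" by simp
  have bounds: "rc_part \<phi> a \<le> rc_part \<phi> r \<and> rc_part \<phi> r \<le> rc_part \<phi> a + (\<phi> r - rlim \<phi> a)"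
    if "a < r" for r
  proof -
    have "{a..<r} = insert a {a<..<r}" using that by auto
    moreover have "rjump \<phi> summable_on {a<..<r}"
      by (rule rjump_summable_on[OF mono \<open>0 \<le> a\<close>]) auto
    then have "infsum (rjump \<phi>) (insert a {a<..<r}) = rjump \<phi> a + infsum (rjump \<phi>) {a<..<r}"
      by (rule infsum_insert) simp
    ultimately have "infsum (rjump \<phi>) {a..<r} = rjump \<phi> a + infsum (rjump \<phi>) {a<..<r}"
      by simp
    moreover have "0 \<le> infsum (rjump \<phi>) {a<..<r}"
      by (rule infsum_nonneg) (use rjump_nonneg[OF mono] \<open>0 \<le> a\<close> in auto)
    moreover have "infsum (rjump \<phi>) {a<..<r} \<le> \<phi> r - rlim \<phi> a"
      using infsum_rjump_Ioo_le[OF mono \<open>0 \<le> a\<close> that] .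
    ultimately show ?thesis
      using rc_part_diff[OF mono \<open>0 \<le> a\<close>, of r] that by (simp add: rjump_def)
  qed
  have "((\<lambda>r. rc_part \<phi> a + (\<phi> r - rlim \<phi> a)) \<longlongrightarrow> rc_part \<phi> a + (rlim \<phi> a - rlim \<phi> a)) (at_right a)"
    by (intro tendsto_intros tendsto_rlim_mono_on[OF mono \<open>0 \<le> a\<close>])
  then have upper: "((\<lambda>r. rc_part \<phi> a + (\<phi> r - rlim \<phi> a)) \<longlongrightarrow> rc_part \<phi> a) (at_right a)"
    by simp
  have "\<forall>\<^sub>F r in at_right a. rc_part \<phi> a \<le> rc_part \<phi> r"
    using bounds eventually_at_right_less[of a] by (auto elim: eventually_mono)
  moreover have "\<forall>\<^sub>F r in at_right a. rc_part \<phi> r \<le> rc_part \<phi> a + (\<phi> r - rlim \<phi> a)"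
    using bounds eventually_at_right_less[of a] by (auto elim: eventually_mono)
  ultimately show ?thesis unfolding continuous_within
    by (rule tendsto_sandwich[OF _ _ tendsto_const upper])
qed

lemma emeasure_rc_part_Ioc:
  assumes mono: "mono_on {0..} \<phi>" and "\<phi> 0 = 0" and "a \<le> b"
  shows "emeasure (interval_measure (rc_part \<phi>)) {a<..b} = ennreal (rc_part \<phi> b - rc_part \<phi> a)"
  by (rule emeasure_interval_measure_Ioc[OF \<open>a \<le> b\<close>])
     (auto intro: rc_part_mono[OF mono \<open>\<phi> 0 = 0\<close>] rc_part_continuous_right[OF mono \<open>\<phi> 0 = 0\<close>])

lemma decseq_Ioc_shrinking: "decseq (\<lambda>n::nat. {s - 1 / Suc n<..s::real})"
  unfolding decseq_def
proof (intro allI impI)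
  fix m n :: nat assume "m \<le> n"
  then have "1 / real (Suc n) \<le> 1 / real (Suc m)" by (simp add: frac_le)
  then show "{s - 1 / Suc n<..s} \<subseteq> {s - 1 / Suc m<..s}" by auto
qed

lemma INT_Ioc_shrinking: "(\<Inter>n::nat. {s - 1 / Suc n<..s::real}) = {s}"
proof (intro equalityI subsetI)
  fix r assume r: "r \<in> (\<Inter>n. {s - 1 / Suc n<..s})"
  then have "r \<le> s" and below: "\<And>n. s - 1 / Suc n < r" by auto
  show "r \<in> {s}"
  proof (rule ccontr)
    assume "r \<notin> {s}"
    with \<open>r \<le> s\<close> have "0 < s - r" by simp
    then obtain n where "1 / Suc n < s - r" by (rule nat_approx_posE)
    with below[of n] show False by simp
  qed
qed simp

lemma rc_part_tendsto_left:
  assumes mono: "mono_on {0..} \<phi>" and "\<phi> 0 = 0"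
    and null: "emeasure (interval_measure (rc_part \<phi>)) {s} = 0"
  shows "(rc_part \<phi> \<longlongrightarrow> rc_part \<phi> s) (at_left s)"
proof (rule tendstoI)
  let ?\<mu> = "interval_measure (rc_part \<phi>)"
  fix \<epsilon> :: real assume "\<epsilon> > 0"
  have "(INF n. emeasure ?\<mu> {s - 1 / Suc n<..s}) = emeasure ?\<mu> (\<Inter>n. {s - 1 / Suc n<..s})"
    using decseq_Ioc_shrinking
    by (rule INF_emeasure_decseq[rotated]) (auto simp: emeasure_rc_part_Ioc[OF mono \<open>\<phi> 0 = 0\<close>])
  also have "\<dots> = emeasure ?\<mu> {s}" unfolding INT_Ioc_shrinking ..
  also have "\<dots> < ennreal \<epsilon>" using null \<open>\<epsilon> > 0\<close> by simp
  finally obtain n where "emeasure ?\<mu> {s - 1 / Suc n<..s} < ennreal \<epsilon>" by (auto simp: INF_less_iff)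
  then have "ennreal (rc_part \<phi> s - rc_part \<phi> (s - 1 / Suc n)) < ennreal \<epsilon>"
    by (simp add: emeasure_rc_part_Ioc[OF mono \<open>\<phi> 0 = 0\<close>])
  then have close: "rc_part \<phi> s - rc_part \<phi> (s - 1 / Suc n) < \<epsilon>"
    using rc_part_mono[OF mono \<open>\<phi> 0 = 0\<close>, of "s - 1 / Suc n" s]
    by (subst (asm) ennreal_less_iff) auto
  show "\<forall>\<^sub>F r in at_left s. dist (rc_part \<phi> r) (rc_part \<phi> s) < \<epsilon>"
    unfolding eventually_at_left_field
  proof (intro exI[of _ "s - 1 / Suc n"] conjI allI impI)
    fix r assume r: "s - 1 / Suc n < r" "r < s"
    have "rc_part \<phi> (s - 1 / Suc n) \<le> rc_part \<phi> r" "rc_part \<phi> r \<le> rc_part \<phi> s"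
      using r by (auto intro: rc_part_mono[OF mono \<open>\<phi> 0 = 0\<close>])
    with close show "dist (rc_part \<phi> r) (rc_part \<phi> s) < \<epsilon>"
      by (simp add: dist_real_def)
  qed simp
qed

lemma mono_on_tendsto_left:
  assumes mono: "mono_on {0..} \<phi>" and "\<phi> 0 = 0" and "0 < s"
    and null: "emeasure (interval_measure (rc_part \<phi>)) {s} = 0"
  shows "(\<phi> \<longlongrightarrow> \<phi> s) (at_left s)"
proof (rule tendstoI)
  fix \<epsilon> :: real assume "\<epsilon> > 0"
  \<comment> \<open>\<open>L\<close> is the left limit of \<open>\<phi>\<close> at \<open>s\<close>; it bounds \<open>\<phi> r\<close> plus the jumps in \<open>[r, s)\<close>.\<close>
  define L where "L = Sup (\<phi> ` {0..<s})"
  have "L - \<epsilon> / 2 < Sup (\<phi> ` {0..<s})" using \<open>\<epsilon> > 0\<close> by (simp add: L_def)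
  moreover have "\<phi> ` {0..<s} \<noteq> {}" using \<open>0 < s\<close> by simp
  ultimately obtain v where "v \<in> \<phi> ` {0..<s}" "L - \<epsilon> / 2 < v" by (rule less_cSupE)
  then obtain q where q: "q \<in> {0..<s}" "L - \<epsilon> / 2 < \<phi> q" by blast
  have "\<forall>\<^sub>F r in at_left s. dist (rc_part \<phi> r) (rc_part \<phi> s) < \<epsilon> / 2"
    by (rule tendstoD[OF rc_part_tendsto_left[OF mono \<open>\<phi> 0 = 0\<close> null]]) (use \<open>\<epsilon> > 0\<close> in simp)
  moreover have "\<forall>\<^sub>F r in at_left s. q < r \<and> r < s"
    unfolding eventually_at_left_field using q by (intro exI[of _ q]) auto
  ultimately show "\<forall>\<^sub>F r in at_left s. dist (\<phi> r) (\<phi> s) < \<epsilon>"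
  proof eventually_elim
    case (elim r)
    then have r: "0 \<le> r" "r < s" "q \<le> r" using q by auto
    have "\<phi> s - \<phi> r = (rc_part \<phi> s - rc_part \<phi> r) + infsum (rjump \<phi>) {r..<s}"
      using rc_part_diff[OF mono \<open>0 \<le> r\<close>] r by simp
    moreover have "infsum (rjump \<phi>) {r..<s} \<le> L - \<phi> r"
      unfolding L_def using infsum_rjump_Ico_le_Sup[OF mono r(1,2)] .
    moreover have "\<phi> q \<le> \<phi> r" "\<phi> r \<le> \<phi> s" using r q by (auto intro: mono_onD[OF mono])
    moreover have "rc_part \<phi> s - rc_part \<phi> r < \<epsilon> / 2"
      using elim abs_ge_minus_self[of "rc_part \<phi> r - rc_part \<phi> s"] unfolding dist_real_def by linarith
    ultimately show ?case using q by (simp add: dist_real_def)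
  qed
qed

section \<open>Regulated functions and the complementarity conditions\<close>

lemma regulated_tendsto_rlim: "regulated f \<Longrightarrow> 0 \<le> t \<Longrightarrow> (f \<longlongrightarrow> rlim f t) (at_right t)"
  unfolding regulated_def rlim_def by (metis tendsto_Lim trivial_limit_at_right_real)

lemma rlim_eqI:
  assumes "(g \<longlongrightarrow> L) (at_right s)" and "\<And>t. s < t \<Longrightarrow> f t = g t"
  shows "rlim f s = L"
proof -
  have "\<forall>\<^sub>F t in at_right s. g t = f t"
    using assms(2) eventually_at_right_less[of s] by (auto elim: eventually_mono)
  with assms(1) have "(f \<longlongrightarrow> L) (at_right s)" by (rule tendsto_cong[THEN iffD1, rotated])
  then show ?thesis unfolding rlim_def by (intro tendsto_Lim) auto
qed

lemma rlim_mono_regulated: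
  assumes "regulated f" "regulated g" "0 \<le> s" "\<And>t. 0 \<le> t \<Longrightarrow> f t \<le> g t"
  shows "rlim f s \<le> rlim g s"
proof (rule tendsto_le[OF _ regulated_tendsto_rlim[OF assms(2,3)] regulated_tendsto_rlim[OF assms(1,3)]])
  show "\<forall>\<^sub>F t in at_right s. f t \<le> g t"
    using assms(3,4) eventually_at_right_less[of s] by (auto elim: eventually_mono)
qed simp

text \<open>The integrand need not be measurable, so a uniform lower bound \<open>c\<close> is used instead of
  mere positivity.\<close>

lemma LS_int_zero_imp_null:
  assumes "LS_int g \<phi> = 0" and "A \<in> sets borel" "A \<subseteq> {0..}" and "c > 0" "\<And>r. r \<in> A \<Longrightarrow> c \<le> g r"
  shows "emeasure (interval_measure (rc_part \<phi>)) A = 0"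
proof -
  let ?\<mu> = "interval_measure (rc_part \<phi>)"
  have "ennreal c * emeasure ?\<mu> A = (\<integral>\<^sup>+ s. ennreal c * indicator A s \<partial>?\<mu>)"
    using assms(2) by (simp add: nn_integral_cmult_indicator)
  also have "\<dots> \<le> (\<integral>\<^sup>+ s. ennreal (g s) * indicator {0..} s \<partial>?\<mu>)"
    by (rule nn_integral_mono) (use assms(3,5) in \<open>auto simp: indicator_def ennreal_leI\<close>)
  also have "\<dots> = 0" using assms(1) by (simp add: LS_int_def)
  finally show ?thesis using \<open>c > 0\<close> by simp
qed

lemma min_right_limit_locally_bounded_below:
  fixes f F :: "real \<Rightarrow> real"
  assumes lim: "\<And>r. 0 \<le> r \<Longrightarrow> (f \<longlongrightarrow> F r) (at_right r)"
    and "0 \<le> s" and pos: "min (f s) (F s) > 0"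
  obtains c \<delta> where "c > 0" "\<delta> > 0" "\<And>r. r \<in> {s..<s + \<delta>} \<Longrightarrow> c \<le> min (f r) (F r)"
proof -
  have "\<forall>\<^sub>F r in at_right s. F s / 2 < f r"
    using lim[OF \<open>0 \<le> s\<close>] by (rule order_tendstoD(1)) (use pos in simp)
  then obtain b where b: "s < b" "\<And>r. s < r \<Longrightarrow> r < b \<Longrightarrow> F s / 2 < f r"
    unfolding eventually_at_right_field by blast
  have F_bound: "F s / 2 \<le> F r" if r: "s < r" "r < b" for r
  proof (rule tendsto_lowerbound[OF lim])
    show "\<forall>\<^sub>F q in at_right r. F s / 2 \<le> f q"
      unfolding eventually_at_right_field using r b by (intro exI[of _ b]) (auto intro: less_imp_le)
  qed (use r \<open>0 \<le> s\<close> in auto)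
  define c where "c = min (min (f s) (F s)) (F s / 2)"
  show thesis
  proof (rule that[of c "b - s"])
    show "c > 0" using pos by (simp add: c_def)
    show "b - s > 0" using b by simp
    fix r assume "r \<in> {s..<s + (b - s)}"
    then consider "r = s" | "s < r" "r < b" by fastforce
    then show "c \<le> min (f r) (F r)"
    proof cases
      case 2
      with b(2)[of r] F_bound[of r] show ?thesis by (auto simp: c_def)
    qed (auto simp: c_def)
  qed
qed

text \<open>Here \<open>f\<close> is the distance of a solution to a barrier, \<open>F\<close> its right limit, and \<open>\<phi>\<close> the
  process pushing at that barrier.\<close>

lemma flat_right_if_LS_int_zero:
  assumes mono: "mono_on {0..} \<phi>" and "\<phi> 0 = 0"
    and lim: "\<And>r. 0 \<le> r \<Longrightarrow> (f \<longlongrightarrow> F r) (at_right r)"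
    and LS: "LS_int (\<lambda>r. min (f r) (F r)) \<phi> = 0"
    and jumps: "\<And>r. 0 \<le> r \<Longrightarrow> F r * rjump \<phi> r = 0"
    and "0 \<le> s" and pos: "min (f s) (F s) > 0"
  shows "\<forall>\<^sub>F r in at_right s. \<phi> r = \<phi> s"
proof -
  obtain c \<delta> where "c > 0" "\<delta> > 0" and bound: "\<And>r. r \<in> {s..<s + \<delta>} \<Longrightarrow> c \<le> min (f r) (F r)"
    using min_right_limit_locally_bounded_below[OF lim \<open>0 \<le> s\<close> pos] by blast
  have null: "emeasure (interval_measure (rc_part \<phi>)) {s..<s + \<delta>} = 0"
    by (rule LS_int_zero_imp_null[OF LS _ _ \<open>c > 0\<close> bound]) (use \<open>0 \<le> s\<close> in auto)
  have "\<phi> r = \<phi> s" if r: "s < r" "r < s + \<delta>" for r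
  proof -
    have "{s<..r} \<subseteq> {s..<s + \<delta>}" using r by auto
    from emeasure_mono[OF this, of "interval_measure (rc_part \<phi>)"] null
    have "emeasure (interval_measure (rc_part \<phi>)) {s<..r} = 0" by simp
    then have "rc_part \<phi> r = rc_part \<phi> s"
      using emeasure_rc_part_Ioc[OF mono \<open>\<phi> 0 = 0\<close>, of s r] rc_part_mono[OF mono \<open>\<phi> 0 = 0\<close>, of s r] r
      by (simp add: ennreal_eq_0_iff)
    moreover have "infsum (rjump \<phi>) {s..<r} = 0"
    proof (rule infsum_0)
      fix q assume q: "q \<in> {s..<r}"
      with \<open>0 \<le> s\<close> have "F q * rjump \<phi> q = 0" by (intro jumps) simp
      moreover have "F q > 0" using bound[of q] q r \<open>c > 0\<close> by simp
      ultimately show "rjump \<phi> q = 0" by simp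
    qed
    ultimately show ?thesis
      using rc_part_diff[OF mono \<open>0 \<le> s\<close>, of r] r by simp
  qed
  then show ?thesis
    unfolding eventually_at_right_field using \<open>\<delta> > 0\<close> by (intro exI[of _ "s + \<delta>"]) auto
qed

lemma tendsto_left_if_LS_int_zero:
  assumes mono: "mono_on {0..} \<phi>" and "\<phi> 0 = 0"
    and LS: "LS_int g \<phi> = 0" and "0 < s" "g s > 0"
  shows "(\<phi> \<longlongrightarrow> \<phi> s) (at_left s)"
proof (rule mono_on_tendsto_left[OF mono \<open>\<phi> 0 = 0\<close> \<open>0 < s\<close>])
  show "emeasure (interval_measure (rc_part \<phi>)) {s} = 0"
    by (rule LS_int_zero_imp_null[OF LS _ _ \<open>g s > 0\<close>]) (use \<open>0 < s\<close> in auto)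
qed

section \<open>Solutions of the reflection problem\<close>

locale RP_decomposition =
  fixes y l u x \<phi>1 \<phi>2 :: "real \<Rightarrow> real"
  assumes regulated: "regulated y" "regulated l" "regulated u" "regulated x"
    and decomp: "\<And>t. 0 \<le> t \<Longrightarrow> x t = y t + \<phi>1 t - \<phi>2 t"
    and lower: "\<And>t. 0 \<le> t \<Longrightarrow> l t \<le> x t"
    and upper: "\<And>t. 0 \<le> t \<Longrightarrow> x t \<le> u t"
    and mono: "mono_on {0..} \<phi>1" "mono_on {0..} \<phi>2"
    and start: "\<phi>1 0 = 0" "\<phi>2 0 = 0"
    and LS_lower: "LS_int (\<lambda>s. min (x s - l s) (rlim x s - rlim l s)) \<phi>1 = 0"
    and LS_upper: "LS_int (\<lambda>s. min (u s - x s) (rlim u s - rlim x s)) \<phi>2 = 0"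
    and jumps_\<phi>1: "\<And>s. 0 \<le> s \<Longrightarrow> (rlim x s - rlim l s) * rjump \<phi>1 s = 0"
      "\<And>s. 0 \<le> s \<Longrightarrow> (u s - x s) * rjump \<phi>1 s = 0"
    and jumps_\<phi>2: "\<And>s. 0 \<le> s \<Longrightarrow> (rlim u s - rlim x s) * rjump \<phi>2 s = 0"
      "\<And>s. 0 \<le> s \<Longrightarrow> (x s - l s) * rjump \<phi>2 s = 0"
begin

lemma rlim_lower: "0 \<le> s \<Longrightarrow> rlim l s \<le> rlim x s"
  by (rule rlim_mono_regulated[OF regulated(2,4) _ lower])

lemma rlim_upper: "0 \<le> s \<Longrightarrow> rlim x s \<le> rlim u s"
  by (rule rlim_mono_regulated[OF regulated(4,3) _ upper])

lemma rjump_decomp: "0 \<le> s \<Longrightarrow> rjump x s = rjump y s + rjump \<phi>1 s - rjump \<phi>2 s"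
proof -
  assume "0 \<le> s"
  have "rlim x s = rlim y s + rlim \<phi>1 s - rlim \<phi>2 s"
  proof (rule rlim_eqI)
    show "((\<lambda>t. y t + \<phi>1 t - \<phi>2 t) \<longlongrightarrow> rlim y s + rlim \<phi>1 s - rlim \<phi>2 s) (at_right s)"
      using \<open>0 \<le> s\<close> by (intro tendsto_intros regulated_tendsto_rlim[OF regulated(1)]
          tendsto_rlim_mono_on[OF mono(1)] tendsto_rlim_mono_on[OF mono(2)])
    show "x t = y t + \<phi>1 t - \<phi>2 t" if "s < t" for t
      using that \<open>0 \<le> s\<close> by (intro decomp) simp
  qed
  with decomp[OF \<open>0 \<le> s\<close>] show ?thesis by (simp add: rjump_def)
qed

lemma \<phi>1_flat_right:
  assumes "0 \<le> s" "l s < x s" "rlim l s < rlim x s"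
  shows "\<forall>\<^sub>F r in at_right s. \<phi>1 r = \<phi>1 s"
proof -
  from assms have pos: "0 < min (x s - l s) (rlim x s - rlim l s)" by simp
  show ?thesis
  proof (rule flat_right_if_LS_int_zero[OF mono(1) start(1) _ LS_lower jumps_\<phi>1(1) \<open>0 \<le> s\<close> pos])
    show "((\<lambda>s. x s - l s) \<longlongrightarrow> rlim x r - rlim l r) (at_right r)" if "0 \<le> r" for r
      using that by (intro tendsto_intros regulated_tendsto_rlim regulated)
  qed
qed

lemma \<phi>2_flat_right:
  assumes "0 \<le> s" "x s < u s" "rlim x s < rlim u s"
  shows "\<forall>\<^sub>F r in at_right s. \<phi>2 r = \<phi>2 s"
proof -
  from assms have pos: "0 < min (u s - x s) (rlim u s - rlim x s)" by simp
  show ?thesis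
  proof (rule flat_right_if_LS_int_zero[OF mono(2) start(2) _ LS_upper jumps_\<phi>2(1) \<open>0 \<le> s\<close> pos])
    show "((\<lambda>s. u s - x s) \<longlongrightarrow> rlim u r - rlim x r) (at_right r)" if "0 \<le> r" for r
      using that by (intro tendsto_intros regulated_tendsto_rlim regulated)
  qed
qed

lemma \<phi>1_tendsto_left:
  assumes "0 < s" "l s < x s" "rlim l s < rlim x s"
  shows "(\<phi>1 \<longlongrightarrow> \<phi>1 s) (at_left s)"
  by (rule tendsto_left_if_LS_int_zero[OF mono(1) start(1) LS_lower \<open>0 < s\<close>]) (use assms in simp)

lemma \<phi>2_tendsto_left:
  assumes "0 < s" "x s < u s" "rlim x s < rlim u s"
  shows "(\<phi>2 \<longlongrightarrow> \<phi>2 s) (at_left s)"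
  by (rule tendsto_left_if_LS_int_zero[OF mono(2) start(2) LS_upper \<open>0 < s\<close>]) (use assms in simp)

end

lemma RP_solution_imp_decomposition:
  assumes sol: "RP_solution y l u x k" and "regulated y" "regulated l" "regulated u"
  obtains \<phi>1 \<phi>2 where "RP_decomposition y l u x \<phi>1 \<phi>2"
proof -
  from sol obtain \<phi>1 \<phi>2 where "regulated x"
    and eqs: "\<forall>t\<ge>0. x t = y t + k t \<and> k t = \<phi>1 t - \<phi>2 t"
    and bounds: "\<forall>t\<ge>0. l t \<le> x t \<and> x t \<le> u t"
    and mono: "mono_on {0..} \<phi>1" "mono_on {0..} \<phi>2" and start: "\<phi>1 0 = 0" "\<phi>2 0 = 0"
    and LS: "LS_int (\<lambda>s. min (x s - l s) (rlim x s - rlim l s)) \<phi>1 = 0"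
      "LS_int (\<lambda>s. min (u s - x s) (rlim u s - rlim x s)) \<phi>2 = 0"
    and sums: "\<forall>t\<ge>0.
           ((\<lambda>s. (rlim x s - rlim l s) * rjump \<phi>1 s) has_sum 0) {0..t} \<and>
           ((\<lambda>s. (u s - x s) * rjump \<phi>1 s) has_sum 0) {0..t} \<and>
           ((\<lambda>s. (rlim u s - rlim x s) * rjump \<phi>2 s) has_sum 0) {0..t} \<and>
           ((\<lambda>s. (x s - l s) * rjump \<phi>2 s) has_sum 0) {0..t}"
    unfolding RP_solution_def by blast
  have rlim_bounds: "rlim l s \<le> rlim x s" "rlim x s \<le> rlim u s" if "0 \<le> s" for s
    using rlim_mono_regulated[OF \<open>regulated l\<close> \<open>regulated x\<close> that]
      rlim_mono_regulated[OF \<open>regulated x\<close> \<open>regulated u\<close> that] bounds by auto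
  have term_zero: "g s = 0"
    if "0 \<le> s" "(g has_sum 0) {0..s}" "\<And>r. 0 \<le> r \<Longrightarrow> 0 \<le> g r" for g :: "real \<Rightarrow> real" and s
    by (rule nonneg_has_sum_le_0D[OF that(2)]) (use that in auto)
  show thesis
  proof (rule that, unfold_locales)
    fix s :: real assume "0 \<le> s"
    note sums_s = sums[rule_format, OF \<open>0 \<le> s\<close>]
    note nonneg = rjump_nonneg[OF mono(1)] rjump_nonneg[OF mono(2)] rlim_bounds bounds[rule_format]
    show "(rlim x s - rlim l s) * rjump \<phi>1 s = 0"
      by (rule term_zero[OF \<open>0 \<le> s\<close> conjunct1[OF sums_s]]) (simp add: nonneg)
    show "(u s - x s) * rjump \<phi>1 s = 0"
      by (rule term_zero[OF \<open>0 \<le> s\<close> conjunct1[OF conjunct2[OF sums_s]]]) (simp add: nonneg)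
    show "(rlim u s - rlim x s) * rjump \<phi>2 s = 0"
      by (rule term_zero[OF \<open>0 \<le> s\<close> conjunct1[OF conjunct2[OF conjunct2[OF sums_s]]]]) (simp add: nonneg)
    show "(x s - l s) * rjump \<phi>2 s = 0"
      by (rule term_zero[OF \<open>0 \<le> s\<close> conjunct2[OF conjunct2[OF conjunct2[OF sums_s]]]]) (simp add: nonneg)
  qed (use assms \<open>regulated x\<close> eqs bounds mono start LS in auto)
qed


locale RP_pair = S: RP_decomposition y l u x \<phi>1 \<phi>2 + S': RP_decomposition y l u x' \<psi>1 \<psi>2
  for y l u x \<phi>1 \<phi>2 x' \<psi>1 \<psi>2
begin

lemma rjump_diff:
  "0 \<le> s \<Longrightarrow> rjump x s - rjump x' s = (rjump \<phi>1 s + rjump \<psi>2 s) - (rjump \<phi>2 s + rjump \<psi>1 s)"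
  using S.rjump_decomp S'.rjump_decomp by simp

lemma strictly_between_if_above:
  assumes "0 \<le> s" "x' s < x s"
  shows "l s < x s" "x' s < u s" "rlim l s < rlim x s" "rlim x' s < rlim u s"
proof -
  show "l s < x s" "x' s < u s"
    using S'.lower[OF \<open>0 \<le> s\<close>] S.upper[OF \<open>0 \<le> s\<close>] \<open>x' s < x s\<close> by auto
  then have "rjump \<phi>2 s = 0" "rjump \<psi>1 s = 0"
    using S.jumps_\<phi>2(2)[OF \<open>0 \<le> s\<close>] S'.jumps_\<phi>1(2)[OF \<open>0 \<le> s\<close>] by auto
  with rjump_diff[OF \<open>0 \<le> s\<close>] rjump_nonneg[OF S.mono(1) \<open>0 \<le> s\<close>] rjump_nonneg[OF S'.mono(2) \<open>0 \<le> s\<close>]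
  have "x s - x' s \<le> rlim x s - rlim x' s" unfolding rjump_def by linarith
  with \<open>x' s < x s\<close> have "rlim x' s < rlim x s" by simp
  then show "rlim l s < rlim x s" "rlim x' s < rlim u s"
    using S'.rlim_lower[OF \<open>0 \<le> s\<close>] S.rlim_upper[OF \<open>0 \<le> s\<close>] by auto
qed

lemma above_if_rlim_above:
  assumes "0 \<le> s" "rlim x' s < rlim x s"
  shows "x' s < x s"
proof -
  have "rlim l s < rlim x s" "rlim x' s < rlim u s"
    using assms S'.rlim_lower[OF \<open>0 \<le> s\<close>] S.rlim_upper[OF \<open>0 \<le> s\<close>] by auto
  then have "rjump \<phi>1 s = 0" "rjump \<psi>2 s = 0"
    using S.jumps_\<phi>1(1)[OF \<open>0 \<le> s\<close>] S'.jumps_\<phi>2(1)[OF \<open>0 \<le> s\<close>] by auto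
  with rjump_diff[OF \<open>0 \<le> s\<close>] rjump_nonneg[OF S.mono(2) \<open>0 \<le> s\<close>] rjump_nonneg[OF S'.mono(1) \<open>0 \<le> s\<close>]
  have "rlim x s - rlim x' s \<le> x s - x' s" unfolding rjump_def by linarith
  with \<open>rlim x' s < rlim x s\<close> show ?thesis by simp
qed

sublocale controlled_increase "\<lambda>s. x s - x' s" "\<lambda>s. \<phi>1 s + \<psi>2 s" "\<lambda>s. rlim x s - rlim x' s"
proof
  fix a b :: real assume "0 \<le> a" "a \<le> b"
  then have "\<phi>2 a \<le> \<phi>2 b" "\<psi>1 a \<le> \<psi>1 b"
    using mono_onD[OF S.mono(2)] mono_onD[OF S'.mono(1)] by auto
  with \<open>0 \<le> a\<close> \<open>a \<le> b\<close> show "x b - x' b - (x a - x' a) \<le> \<phi>1 b + \<psi>2 b - (\<phi>1 a + \<psi>2 a)"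
    by (simp add: S.decomp S'.decomp)
next
  fix s :: real assume "0 \<le> s"
  then show "((\<lambda>s. x s - x' s) \<longlongrightarrow> rlim x s - rlim x' s) (at_right s)"
    by (intro tendsto_intros regulated_tendsto_rlim S.regulated S'.regulated)
next
  fix s :: real assume "0 \<le> s" "rlim x s - rlim x' s > 0"
  with above_if_rlim_above show "x s - x' s > 0" by simp
next
  fix s :: real assume "0 \<le> s" "x s - x' s > 0"
  with strictly_between_if_above[of s]
  have "\<forall>\<^sub>F r in at_right s. \<phi>1 r = \<phi>1 s \<and> \<psi>2 r = \<psi>2 s"
    by (intro eventually_conj S.\<phi>1_flat_right S'.\<phi>2_flat_right) auto
  then show "\<forall>\<^sub>F r in at_right s. \<phi>1 r + \<psi>2 r = \<phi>1 s + \<psi>2 s"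
    by (rule eventually_mono) simp
next
  fix s :: real assume "0 < s" "x s - x' s > 0"
  with strictly_between_if_above[of s] show "((\<lambda>s. \<phi>1 s + \<psi>2 s) \<longlongrightarrow> \<phi>1 s + \<psi>2 s) (at_left s)"
    by (intro tendsto_add S.\<phi>1_tendsto_left S'.\<phi>2_tendsto_left) auto
qed

lemma le: "0 \<le> t \<Longrightarrow> x t \<le> x' t"
  using nonpos[of t] by (simp add: S.decomp S'.decomp S.start S'.start)

end

theorem theorem1:
  fixes y l u x k x' k' :: "real \<Rightarrow> real"
  assumes "regulated y" and "regulated l" and "regulated u"
    and "\<forall>t\<ge>0. l t \<le> u t"
    and "l 0 \<le> y 0" and "y 0 \<le> u 0"
    and "\<forall>t\<ge>0. (INF s\<in>{0..t}. u s - l s) > 0"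
    and "RP_solution y l u x k"
    and "RP_solution y l u x' k'"
  shows "(\<forall>t\<ge>0. x t = x' t) \<and> (\<forall>t\<ge>0. k t = k' t)"
proof -
  obtain \<phi>1 \<phi>2 where S: "RP_decomposition y l u x \<phi>1 \<phi>2"
    by (rule RP_solution_imp_decomposition[OF assms(8,1,2,3)])
  obtain \<psi>1 \<psi>2 where S': "RP_decomposition y l u x' \<psi>1 \<psi>2"
    by (rule RP_solution_imp_decomposition[OF assms(9,1,2,3)])
  have x_eq: "x t = x' t" if "0 \<le> t" for t
    using RP_pair.le[OF RP_pair.intro[OF S S'] that] RP_pair.le[OF RP_pair.intro[OF S' S] that]
    by (rule antisym)
  moreover have "k t = k' t" if "0 \<le> t" for t
  proof -
    have "x t = y t + k t" "x' t = y t + k' t"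
      using assms(8,9) that unfolding RP_solution_def by blast+
    with x_eq[OF that] show ?thesis by simp
  qed
  ultimately show ?thesis by blast
qed

end
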